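(* Let $K\ge1$, $n\ge1$, $\delta\in(0,1)$, $\ell_K=\sum_{k=1}^K1/k$, and $s\in\{1,\dots,K\}$. Define the half-widths $$h_{\mathrm e}(s)=\sqrt{\frac{\log\left(\frac{2K}{\delta s}\right)}{2n}}\cdot\frac{\log\left(\frac{2}{\delta}\right)+\log\left(\frac{2K}{\delta s}\right)}{2\sqrt{\log\left(\frac{2}{\delta}\right)\log\left(\frac{2K}{\delta s}\right)}},\qquad h(s)=\sqrt{\frac{\log\left(\frac{2K\ell_K}{\delta s}\right)}{2n}},$$ which are the half-widths of the intervals $C^{\delta\text{-}\mathrm{Hoef}}(\delta s/K)$ and $C^{\mathrm{Hoef}}(\delta s/(K\ell_K))$ centered at the sample mean. If $$s\ge\frac{K}{\exp\left(2\sqrt{\log\left(\frac{2}{\delta}\right)\log\ell_K}\right)},$$ then $h_{\mathrm e}(s)\le h(s)$, i.e. $C^{\delta\text{-}\mathrm{Hoef}}(\delta s/K)$ is as tight as or tighter than $C^{\mathrm{Hoef}}(\delta s/(K\ell_K))$.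
   Context: Given $n$ i.i.d. samples in $[0,1]$ with sample mean $\hat\mu_n$, $C^{\alpha'\text{-}\mathrm{Hoef}}(\alpha)=\left(\hat\mu_n\pm\sqrt{\frac{\log(2/\alpha)}{2n}}\cdot\frac{\log(2/\alpha)+\log(2/\alpha')}{2\sqrt{\log(2/\alpha')\log(2/\alpha)}}\right)$ (used here with $\alpha'=\delta$) and $C^{\mathrm{Hoef}}(\alpha)=\left(\hat\mu_n\pm\sqrt{\frac{\log(2/\alpha)}{2n}}\right)$. Here $s$ plays the role of the size $|S|$ of the selected set. *)

theory Defs
  imports "HOL-Analysis.Analysis"
begin

definition ellK :: "nat \<Rightarrow> real" where
  "ellK K = (\<Sum>k=1..K. 1 / real k)"

definition hoef_adapt_hw :: "nat \<Rightarrow> real \<Rightarrow> real \<Rightarrow> real" where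
  "hoef_adapt_hw n alpha' alpha =
     sqrt (ln (2 / alpha) / (2 * real n)) *
     ((ln (2 / alpha) + ln (2 / alpha')) / (2 * sqrt (ln (2 / alpha') * ln (2 / alpha))))"

definition hoef_hw :: "nat \<Rightarrow> real \<Rightarrow> real" where
  "hoef_hw n alpha = sqrt (ln (2 / alpha) / (2 * real n))"

definition C_adapt_hoef :: "nat \<Rightarrow> real \<Rightarrow> real \<Rightarrow> real \<Rightarrow> real set" where
  "C_adapt_hoef n mu alpha' alpha =
     {mu - hoef_adapt_hw n alpha' alpha <..< mu + hoef_adapt_hw n alpha' alpha}"

definition C_hoef :: "nat \<Rightarrow> real \<Rightarrow> real \<Rightarrow> real set" where
  "C_hoef n mu alpha = {mu - hoef_hw n alpha <..< mu + hoef_hw n alpha}"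

end

theory Submission
  imports Defs
begin

text \<open>Put \<open>a = ln (2/\<alpha>')\<close> and \<open>b = ln (2/\<alpha>)\<close>. The adapted half-width is
  \<open>(a + b) / (2 sqrt (2 n a))\<close>, whereas the Hoeffding half-width at level \<open>\<alpha>/c\<close> is
  \<open>sqrt ((b + ln c) / (2 n))\<close>. As \<open>(a + b)\<^sup>2 = (b - a)\<^sup>2 + 4 a b\<close>, the first is at most the second as soon as
  \<open>\<bar>b - a\<bar> \<le> 2 sqrt (a ln c)\<close>. For \<open>\<alpha>' = \<delta>\<close>, \<open>\<alpha> = \<delta> s / K\<close> and \<open>c = \<ell>\<^sub>K\<close> we have \<open>b - a = ln (K/s)\<close>,
  so this is exactly the hypothesis on \<open>s\<close>.\<close>

lemma ellK_ge_1:
  assumes "1 \<le> K"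
  shows "1 \<le> ellK K"
proof -
  have "ellK K = 1 + (\<Sum>k=2..K. 1 / real k)"
    unfolding ellK_def using assms by (simp add: sum.atLeast_Suc_atMost numeral_2_eq_2)
  moreover have "0 \<le> (\<Sum>k=2..K. 1 / real k)"
    by (rule sum_nonneg) simp
  ultimately show ?thesis
    by simp
qed

lemma hoef_hw_eq: "hoef_hw n alpha = sqrt (1 / (2 * real n)) * sqrt (ln (2 / alpha))"
  unfolding hoef_hw_def by (simp add: real_sqrt_mult[symmetric])

lemma hoef_adapt_hw_eq:
  assumes "0 < ln (2 / alpha')" and "0 < ln (2 / alpha)"
  shows "hoef_adapt_hw n alpha' alpha
           = sqrt (1 / (2 * real n)) * ((ln (2 / alpha) + ln (2 / alpha')) / (2 * sqrt (ln (2 / alpha'))))"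
proof -
  define a where "a = ln (2 / alpha')"
  define b where "b = ln (2 / alpha)"
  have "0 < sqrt a" "0 < sqrt b"
    using assms unfolding a_def b_def by auto
  have "hoef_adapt_hw n alpha' alpha = sqrt (b / (2 * real n)) * ((b + a) / (2 * (sqrt a * sqrt b)))"
    unfolding hoef_adapt_hw_def a_def b_def by (simp add: real_sqrt_mult)
  also have "\<dots> = sqrt (1 / (2 * real n)) * (sqrt b * ((b + a) / (2 * (sqrt a * sqrt b))))"
    by (simp add: real_sqrt_mult[symmetric])
  also have "sqrt b * ((b + a) / (2 * (sqrt a * sqrt b))) = (b + a) / (2 * sqrt a)"
    using \<open>0 < sqrt a\<close> \<open>0 < sqrt b\<close> by (simp add: field_simps)
  finally show ?thesis
    unfolding a_def b_def .
qed

lemma half_sum_div_sqrt_le_sqrt: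
  fixes a b L :: real
  assumes "0 < a" and "0 \<le> L" and "\<bar>b - a\<bar> \<le> 2 * sqrt (a * L)"
  shows "(a + b) / (2 * sqrt a) \<le> sqrt (b + L)"
proof -
  have "(b - a)\<^sup>2 \<le> (2 * sqrt (a * L))\<^sup>2"
    using assms(3) by (metis abs_ge_zero power2_abs power_mono)
  also have "\<dots> = 4 * a * L"
    using assms(1,2) by (simp add: power_mult_distrib)
  finally have "(a + b)\<^sup>2 \<le> 4 * a * (b + L)"
    by (simp add: power2_eq_square algebra_simps)
  then have "a + b \<le> sqrt (4 * a * (b + L))"
    by (simp add: real_le_rsqrt)
  also have "\<dots> = 2 * sqrt a * sqrt (b + L)"
    by (simp add: real_sqrt_mult)
  finally show ?thesis
    using assms(1) by (simp add: divide_le_eq mult_ac)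
qed

lemma hoef_adapt_hw_le_hoef_hw_div:
  assumes "0 < alpha'" "alpha' < 2" "0 < alpha" "alpha < 2" "1 \<le> c"
    and "\<bar>ln (alpha' / alpha)\<bar> \<le> 2 * sqrt (ln (2 / alpha') * ln c)"
  shows "hoef_adapt_hw n alpha' alpha \<le> hoef_hw n (alpha / c)"
proof -
  define a where "a = ln (2 / alpha')"
  define b where "b = ln (2 / alpha)"
  have "0 < a" "0 < b" "0 \<le> ln c"
    using assms(1-5) unfolding a_def b_def by auto
  have "b - a = ln (alpha' / alpha)"
    unfolding a_def b_def using assms(1,3) by (simp add: ln_div)
  then have half_sum_le: "(a + b) / (2 * sqrt a) \<le> sqrt (b + ln c)"
    using assms(6) unfolding a_def[symmetric]
    by (intro half_sum_div_sqrt_le_sqrt[OF \<open>0 < a\<close> \<open>0 \<le> ln c\<close>]) simp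
  have "hoef_adapt_hw n alpha' alpha = sqrt (1 / (2 * real n)) * ((a + b) / (2 * sqrt a))"
    using hoef_adapt_hw_eq \<open>0 < a\<close> \<open>0 < b\<close> unfolding a_def b_def by (simp add: add.commute)
  also have "\<dots> \<le> sqrt (1 / (2 * real n)) * sqrt (b + ln c)"
    by (rule mult_left_mono[OF half_sum_le]) simp
  also have "b + ln c = ln (2 / (alpha / c))"
    unfolding b_def using assms(3,5) by (simp add: ln_div ln_mult)
  finally show ?thesis
    unfolding hoef_hw_eq .
qed

lemma ln_div_le_of_div_exp_le:
  fixes x y t :: real
  assumes "0 < x" "0 < y" "x / exp t \<le> y"
  shows "ln (x / y) \<le> t"
proof -
  have "x / y \<le> exp t"
    using assms by (simp add: field_simps)
  then have "ln (x / y) \<le> ln (exp t)"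
    using assms(1,2) by (subst ln_le_cancel_iff) auto
  then show ?thesis
    by simp
qed

theorem proposition6:
  fixes K n s :: nat and \<delta> :: real
  assumes "K \<ge> 1" and "n \<ge> 1" and "0 < \<delta>" and "\<delta> < 1"
    and "1 \<le> s" and "s \<le> K"
    and "real s \<ge> real K / exp (2 * sqrt (ln (2 / \<delta>) * ln (ellK K)))"
  shows "hoef_adapt_hw n \<delta> (\<delta> * real s / real K)
           \<le> hoef_hw n (\<delta> * real s / (real K * ellK K))"
proof -
  have "0 < real s" "real s \<le> real K"
    using assms(5,6) by auto
  have "0 < \<delta> * real s / real K" "\<delta> * real s / real K \<le> \<delta>"
    using assms(3) \<open>0 < real s\<close> \<open>real s \<le> real K\<close> by (simp_all add: field_simps)
  have "\<delta> / (\<delta> * real s / real K) = real K / real s"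
    using assms(3) by simp
  moreover have "0 \<le> ln (real K / real s)"
    using \<open>0 < real s\<close> \<open>real s \<le> real K\<close> by simp
  moreover have "ln (real K / real s) \<le> 2 * sqrt (ln (2 / \<delta>) * ln (ellK K))"
    using \<open>0 < real s\<close> \<open>real s \<le> real K\<close> assms(7) by (intro ln_div_le_of_div_exp_le) auto
  ultimately have "hoef_adapt_hw n \<delta> (\<delta> * real s / real K) \<le> hoef_hw n (\<delta> * real s / real K / ellK K)"
    using assms(3,4) \<open>0 < \<delta> * real s / real K\<close> \<open>\<delta> * real s / real K \<le> \<delta>\<close> ellK_ge_1[OF assms(1)]
    by (intro hoef_adapt_hw_le_hoef_hw_div) auto
  then show ?thesis
    by (simp add: divide_divide_eq_left)
qed

end
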